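(* Let $G$ be a graph on $n$ vertices with degrees $d_1,\ldots,d_n$ and signless Laplacian eigenvalues $q_1\ge\cdots\ge q_n$, and let $t\ge 1$ be an integer. Then the signless Laplacian eigenvalues of the blow-up $G^{(t)}$, listed with multiplicity (a total of $tn$ values), are $tq_1,\ldots,tq_n$ together with $td_1,\ldots,td_n$, where each $td_i$ ($i=1,\ldots,n$) is taken with multiplicity $t-1$.
   Context: All graphs are simple and undirected. For a graph $H$, $A(H)$ is its adjacency matrix, $D(H)$ the diagonal matrix of its vertex degrees, and $Q(H)=D(H)+A(H)$ its signless Laplacian matrix; signless Laplacian eigenvalues are the eigenvalues of $Q(H)$. For a graph $G$ and an integer $t\ge 1$, the blow-up $G^{(t)}$ is the graph obtained by replacing each vertex $u$ of $G$ by a set $V_u$ of $t$ pairwise nonadjacent vertices, and each edge $\{u,v\}$ of $G$ by a complete bipartite graph with parts $V_u$ and $V_v$ (so $A(G^{(t)})=A(G)\otimes J_t$, with $J_t$ the $t\times t$ all-ones matrix). *)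

theory Defs
  imports "Jordan_Normal_Form.Char_Poly"
begin

text \<open>A simple graph on vertex set {0..<n} is given by an edge relation E that is
  symmetric and irreflexive on {0..<n}; values of E outside {0..<n} are irrelevant.\<close>

definition simple_graph :: "nat \<Rightarrow> (nat \<Rightarrow> nat \<Rightarrow> bool) \<Rightarrow> bool" where
  "simple_graph n E \<longleftrightarrow> (\<forall>i<n. \<forall>j<n. E i j = E j i) \<and> (\<forall>i<n. \<not> E i i)"

definition degree_of :: "nat \<Rightarrow> (nat \<Rightarrow> nat \<Rightarrow> bool) \<Rightarrow> nat \<Rightarrow> nat" where
  "degree_of n E i = card {j. j < n \<and> E i j}"

definition adjacency_matrix :: "nat \<Rightarrow> (nat \<Rightarrow> nat \<Rightarrow> bool) \<Rightarrow> real mat" where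
  "adjacency_matrix n E = mat n n (\<lambda>(i, j). if E i j then 1 else 0)"

definition degree_matrix :: "nat \<Rightarrow> (nat \<Rightarrow> nat \<Rightarrow> bool) \<Rightarrow> real mat" where
  "degree_matrix n E = mat n n (\<lambda>(i, j). if i = j then real (degree_of n E i) else 0)"

definition signless_laplacian :: "nat \<Rightarrow> (nat \<Rightarrow> nat \<Rightarrow> bool) \<Rightarrow> real mat" where
  "signless_laplacian n E = degree_matrix n E + adjacency_matrix n E"

text \<open>Eigenvalues listed with (algebraic) multiplicity: the multiset of roots of the
  characteristic polynomial. For real symmetric matrices all roots are real.\<close>
definition eigenvalues_mset :: "real mat \<Rightarrow> real multiset" where
  "eigenvalues_mset A = proots (char_poly A)"

text \<open>Blow-up G^(t): vertex u of G is replaced by V_u = {u*t ..< u*t + t}; the vertex k of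
  the blow-up (k < n*t) lies in V_(k div t). Two vertices are adjacent iff their
  classes are adjacent in G, so A(G^(t)) = A(G) \<otimes> J_t.\<close>
definition blow_up :: "nat \<Rightarrow> (nat \<Rightarrow> nat \<Rightarrow> bool) \<Rightarrow> nat \<Rightarrow> nat \<Rightarrow> bool" where
  "blow_up t E k l = E (k div t) (l div t)"

end

theory Submission
  imports Defs
begin

text \<open>Write D, A for the degree and adjacency matrices of G, so that
  Q(G^(t)) = t D \<otimes> I_t + A \<otimes> J_t.
  Conjugating by the unipotent matrix that, inside every class V_u, adds the other columns to
  the column of the representative (and subtracts the representative row from the other rows)
  turns A \<otimes> J_t into A \<otimes> e_0 r^T with r = (t, 1, ..., 1) and leaves
  t D \<otimes> I_t unchanged. Listing the representatives first, the resulting matrix is block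
  upper triangular with diagonal blocks t Q(G) and t D \<otimes> I_(t-1), so the characteristic
  polynomial factors accordingly.\<close>

lemma pcompose_power: "pcompose (p ^ k) q = pcompose p q ^ k"
  by (induction k) (auto simp: pcompose_mult pcompose_1)

lemma linear_power_dvd_pcompose_scale:
  fixes p :: "'a :: field poly"
  assumes d: "d \<noteq> 0" and dvd: "[:-a, 1:] ^ k dvd p"
  shows "[:-(a/d), 1:] ^ k dvd pcompose p [:0, d:]"
proof -
  obtain r where r: "p = [:-a, 1:] ^ k * r" using dvd by (auto simp: dvd_def)
  have linear: "pcompose [:-a, 1:] [:0, d:] = Polynomial.smult d [:-(a/d), 1:]"
    using d by simp
  have "pcompose p [:0, d:] = pcompose [:-a, 1:] [:0, d:] ^ k * pcompose r [:0, d:]"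
    unfolding r by (simp add: pcompose_mult pcompose_power)
  also have "\<dots> = Polynomial.smult (d ^ k) ([:-(a/d), 1:] ^ k * pcompose r [:0, d:])"
    unfolding linear by (simp only: smult_power mult_smult_left)
  finally show ?thesis using d by (simp add: dvd_smult)
qed

lemma order_pcompose_scale:
  fixes p :: "'a :: field poly"
  assumes c: "c \<noteq> 0" and p: "p \<noteq> 0"
  shows "order y (pcompose p [:0, 1/c:]) = order (y/c) p"
proof -
  have recompose: "pcompose (pcompose p [:0, 1/c:]) [:0, c:] = p"
    using c by (simp add: pcompose_assoc[symmetric])
  then have nz: "pcompose p [:0, 1/c:] \<noteq> 0"
    using p by auto
  have "[:-y, 1:] ^ order (y/c) p dvd pcompose p [:0, 1/c:]"
    using linear_power_dvd_pcompose_scale[of "1/c" "y/c" "order (y/c) p" p] c order_1[of "y/c" p]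
    by simp
  moreover have "[:-(y/c), 1:] ^ order y (pcompose p [:0, 1/c:]) dvd p"
    using linear_power_dvd_pcompose_scale[OF c order_1[of y "pcompose p [:0, 1/c:]"]] recompose by simp
  ultimately show ?thesis using nz p by (simp add: order_divides le_antisym)
qed

lemma char_poly_nonzero: "A \<in> carrier_mat n n \<Longrightarrow> char_poly A \<noteq> 0"
  using degree_monic_char_poly[of A n] by auto

lemma char_poly_smult_mat:
  fixes A :: "'a :: field_char_0 mat"
  assumes A: "A \<in> carrier_mat n n" and c: "c \<noteq> 0"
  shows "char_poly (c \<cdot>\<^sub>m A) = Polynomial.smult (c ^ n) (pcompose (char_poly A) [:0, 1/c:])"
proof (rule poly_eq_poly_eq_iff[THEN iffD1], rule ext)
  fix x
  have "- char_matrix (c \<cdot>\<^sub>m A) x = c \<cdot>\<^sub>m (- char_matrix A (x/c))"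
    by (rule eq_matI) (use A c in \<open>auto simp: char_matrix_def field_simps\<close>)
  then have "poly (char_poly (c \<cdot>\<^sub>m A)) x = c ^ n * det (- char_matrix A (x/c))"
    using char_poly_matrix[of "c \<cdot>\<^sub>m A" n x] A by (simp add: char_matrix_def)
  also have "\<dots> = c ^ n * poly (char_poly A) (x/c)"
    using char_poly_matrix[OF A, of "x/c"] by simp
  finally show "poly (char_poly (c \<cdot>\<^sub>m A)) x = poly (Polynomial.smult (c ^ n) (pcompose (char_poly A) [:0, 1/c:])) x"
    by (simp add: poly_pcompose)
qed

lemma proots_char_poly_smult_mat:
  fixes A :: "'a :: field_char_0 mat"
  assumes A: "A \<in> carrier_mat n n" and c: "c \<noteq> 0"
  shows "proots (char_poly (c \<cdot>\<^sub>m A)) = image_mset ((*) c) (proots (char_poly A))"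
proof (rule multiset_eqI)
  fix y
  have nz: "char_poly A \<noteq> 0" by (rule char_poly_nonzero[OF A])
  have "(*) c -` {y} = {y/c}" using c by (auto simp: field_simps)
  then have "count (image_mset ((*) c) (proots (char_poly A))) y = order (y/c) (char_poly A)"
    using nz by (auto simp: count_image_mset Int_insert_left order_0I)
  then show "count (proots (char_poly (c \<cdot>\<^sub>m A))) y = count (image_mset ((*) c) (proots (char_poly A))) y"
    unfolding char_poly_smult_mat[OF A c] using c nz
    by (simp add: order_smult order_pcompose_scale pcompose_eq_0_iff)
qed

lemma char_poly_four_block_mat_lower_left_zero:
  fixes A1 :: "'a :: idom mat"
  assumes A1: "A1 \<in> carrier_mat n n" and A2: "A2 \<in> carrier_mat n m" and A4: "A4 \<in> carrier_mat m m"
  shows "char_poly (four_block_mat A1 A2 (0\<^sub>m m n) A4) = char_poly A1 * char_poly A4"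
proof -
  have "char_poly_matrix (four_block_mat A1 A2 (0\<^sub>m m n) A4) =
    four_block_mat (char_poly_matrix A1) (map_mat (\<lambda>a. [:-a:]) A2) (0\<^sub>m m n) (char_poly_matrix A4)"
    by (rule eq_matI) (use A1 A2 A4 in \<open>auto simp: char_poly_matrix_def index_mat_four_block\<close>)
  then show ?thesis
    unfolding char_poly_def by (simp, intro det_four_block_mat_lower_left_zero) (use A1 A2 A4 in auto)
qed

lemma proots_char_poly_diagonal:
  fixes f :: "nat \<Rightarrow> 'a :: idom"
  shows "proots (char_poly (mat m m (\<lambda>(i, j). if i = j then f i else 0))) = mset (map f [0..<m])"
proof -
  have "diag_mat (mat m m (\<lambda>(i, j). if i = j then f i else 0)) = map f [0..<m]"
    by (rule nth_equalityI) (auto simp: diag_mat_def)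
  moreover have "char_poly (mat m m (\<lambda>(i, j). if i = j then f i else 0)) =
      (\<Prod>a \<leftarrow> diag_mat (mat m m (\<lambda>(i, j). if i = j then f i else 0)). [:- a, 1:])"
    by (rule char_poly_upper_triangular[of _ m]) (auto simp: upper_triangular_def)
  moreover have "proots (\<Prod>a \<leftarrow> xs. [:- a, 1:]) = mset xs" for xs :: "'a list"
  proof (induction xs)
    case (Cons a xs)
    have "(\<Prod>a \<leftarrow> xs. [:- a, 1:]) \<noteq> 0"
      by (auto simp: prod_list_zero_iff)
    then show ?case
      using Cons.IH proots_mult[of "[:- a, 1:]" "\<Prod>a \<leftarrow> xs. [:- a, 1:]"] by simp
  qed simp
  ultimately show ?thesis
    by (simp only:)
qed

lemma det_permute_rows_cols:
  fixes C :: "'a :: comm_ring_1 mat"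
  assumes C: "C \<in> carrier_mat n n" and p: "p permutes {0..<n}"
  shows "det (mat n n (\<lambda>(i, j). C $$ (p i, p j))) = det C"
proof -
  have pn: "\<And>i. i < n \<Longrightarrow> p i < n" using p by (simp add: permutes_in_image)
  let ?C1 = "mat n n (\<lambda>(i, j). C $$ (i, p j))"
  have "mat n n (\<lambda>(i, j). C $$ (p i, p j)) = mat n n (\<lambda>(i, j). ?C1 $$ (p i, j))"
    by (rule eq_matI) (auto simp: pn)
  then have "det (mat n n (\<lambda>(i, j). C $$ (p i, p j))) = signof p * det ?C1"
    using det_permute_rows[of ?C1 n p] p by simp
  also have "det ?C1 = det (transpose_mat ?C1)" by (simp add: det_transpose[of _ n])
  also have "transpose_mat ?C1 = mat n n (\<lambda>(i, j). transpose_mat C $$ (p i, j))"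
    by (rule eq_matI) (use C in \<open>auto simp: pn\<close>)
  also have "det \<dots> = signof p * det (transpose_mat C)"
    by (rule det_permute_rows[OF _ p]) (use C in auto)
  finally show ?thesis
    using C by (cases rule: sign_cases[of p]) (auto simp: det_transpose)
qed

lemma char_poly_permute_rows_cols:
  fixes A :: "'a :: comm_ring_1 mat"
  assumes A: "A \<in> carrier_mat n n" and p: "p permutes {0..<n}"
  shows "char_poly (mat n n (\<lambda>(i, j). A $$ (p i, p j))) = char_poly A"
proof -
  have pn: "\<And>i. i < n \<Longrightarrow> p i < n" using p by (simp add: permutes_in_image)
  have inj: "\<And>i j. p i = p j \<longleftrightarrow> i = j" using p by (meson permutes_inj injD)
  have "char_poly_matrix (mat n n (\<lambda>(i, j). A $$ (p i, p j))) =
     mat n n (\<lambda>(i, j). char_poly_matrix A $$ (p i, p j))"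
    by (rule eq_matI) (use A in \<open>auto simp: pn inj char_poly_matrix_def\<close>)
  then show ?thesis
    unfolding char_poly_def using det_permute_rows_cols[OF char_poly_matrix_closed[OF A] p] by simp
qed

lemma one_smult_mat [simp]: "(1 :: 'a :: monoid_mult) \<cdot>\<^sub>m A = A"
  by (rule eq_matI) auto

lemma card_div_preimage:
  assumes t: "t > 0"
  shows "card {l. l < n * t \<and> P (l div t)} = t * card {j. j < n \<and> P j}"
proof -
  let ?f = "\<lambda>(j, a). j * t + a"
  have eq: "{l. l < n * t \<and> P (l div t)} = ?f ` ({j. j < n \<and> P j} \<times> {..<t})"
  proof (intro equalityI subsetI)
    fix l assume l: "l \<in> {l. l < n * t \<and> P (l div t)}"
    then have "l div t < n" using t by (simp add: less_mult_imp_div_less)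
    then show "l \<in> ?f ` ({j. j < n \<and> P j} \<times> {..<t})"
      using l t by (intro image_eqI[of _ _ "(l div t, l mod t)"]) auto
  next
    fix l assume "l \<in> ?f ` ({j. j < n \<and> P j} \<times> {..<t})"
    then obtain j a where l: "l = j * t + a" "j < n" "P j" "a < t" by auto
    have "j * t + a < (j + 1) * t" using l by simp
    also have "\<dots> \<le> n * t" using l by (intro mult_le_mono1) simp
    finally show "l \<in> {l. l < n * t \<and> P (l div t)}" using l t by simp
  qed
  have inj: "inj_on ?f ({j. j < n \<and> P j} \<times> {..<t})"
  proof (rule inj_onI, clarify)
    fix j a j' a' assume h: "a < t" "a' < t" "j * t + a = j' * t + a'"
    have "j = (j * t + a) div t" using h(1) by simp
    also have "\<dots> = j'" using h by simp
    finally show "j = j' \<and> a = a'" using h by simp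
  qed
  show ?thesis unfolding eq card_image[OF inj] card_cartesian_product by simp
qed

lemma degree_blow_up:
  assumes "t > 0" and "i < n * t"
  shows "degree_of (n * t) (blow_up t E) i = t * degree_of n E (i div t)"
  unfolding degree_of_def blow_up_def using card_div_preimage[OF assms(1), of n "E (i div t)"] by simp

lemma mset_map_div_upt:
  "mset (map (\<lambda>i. f (i div s)) [0..<n * s]) = repeat_mset s (image_mset f (mset_set {0..<n}))"
proof (induction n)
  case (Suc n)
  have "[0..<Suc n * s] = [0..<n * s] @ [n * s..<n * s + s]"
    using upt_add_eq_append[of 0 "n * s" s] by (simp add: add.commute)
  moreover have "map (\<lambda>i. f (i div s)) [n * s..<n * s + s] = replicate s (f n)"
    by (rule nth_equalityI) (auto simp: nth_append)
  ultimately show ?case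
    using Suc by (simp add: atLeastLessThanSuc repeat_mset_distrib_add_mset)
qed simp

definition adj_weight :: "(nat \<Rightarrow> nat \<Rightarrow> bool) \<Rightarrow> nat \<Rightarrow> nat \<Rightarrow> real" where
  "adj_weight E v u = (if E v u then 1 else 0)"

lemma signless_laplacian_index:
  assumes "v < n" and "u < n"
  shows "signless_laplacian n E $$ (v, u) = (if v = u then real (degree_of n E v) else 0) + adj_weight E v u"
  using assms by (simp add: signless_laplacian_def degree_matrix_def adjacency_matrix_def adj_weight_def)

lemma signless_laplacian_blow_up_index:
  assumes t: "t > 0" and i: "i < n * t" and k: "k < n * t"
  shows "signless_laplacian (n * t) (blow_up t E) $$ (i, k) =
     (if i = k then real t * real (degree_of n E (i div t)) else 0) + adj_weight E (i div t) (k div t)"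
  using i k degree_blow_up[OF t i, of E]
  by (auto simp: signless_laplacian_def degree_matrix_def adjacency_matrix_def adj_weight_def blow_up_def)

lemma signless_laplacian_carrier: "signless_laplacian n E \<in> carrier_mat n n"
  by (simp add: signless_laplacian_def degree_matrix_def adjacency_matrix_def)

definition class_rep_mat :: "nat \<Rightarrow> nat \<Rightarrow> real mat" where
  "class_rep_mat N t = mat N N (\<lambda>(i, k). if k = i div t * t \<and> i mod t \<noteq> 0 then 1 else 0)"

lemma class_rep_mat_carrier [simp]: "class_rep_mat N t \<in> carrier_mat N N"
  by (simp add: class_rep_mat_def)

lemma class_rep_mat_dims [simp]: "dim_row (class_rep_mat N t) = N" "dim_col (class_rep_mat N t) = N"
  by (simp_all add: class_rep_mat_def)

lemma class_rep_less: "(i :: nat) < N \<Longrightarrow> i div t * t < N"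
  by (rule le_less_trans[OF div_times_less_eq_dividend])

lemma class_rep_mat_mult_left_index:
  assumes Y: "Y \<in> carrier_mat N N" and i: "i < N" and k: "k < N"
  shows "((1\<^sub>m N + c \<cdot>\<^sub>m class_rep_mat N t) * Y) $$ (i, k) =
    Y $$ (i, k) + (if i mod t \<noteq> 0 then c * Y $$ (i div t * t, k) else 0)"
proof -
  have "((1\<^sub>m N + c \<cdot>\<^sub>m class_rep_mat N t) * Y) $$ (i, k) =
     (\<Sum>j\<in>{0..<N}. ((if i = j then 1 else 0) + c * (if j = i div t * t \<and> i mod t \<noteq> 0 then 1 else 0)) * Y $$ (j, k))"
    using Y i k by (auto simp: scalar_prod_def class_rep_mat_def intro!: sum.cong)
  also have "\<dots> = (\<Sum>j\<in>{0..<N}. if i = j then Y $$ (j, k) else 0) +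
      (\<Sum>j\<in>{0..<N}. if j = i div t * t then (if i mod t \<noteq> 0 then c * Y $$ (j, k) else 0) else 0)"
    unfolding sum.distrib[symmetric] by (rule sum.cong) (auto simp: algebra_simps)
  also have "\<dots> = Y $$ (i, k) + (if i mod t \<noteq> 0 then c * Y $$ (i div t * t, k) else 0)"
    using i class_rep_less[OF i] by (simp add: sum.delta')
  finally show ?thesis .
qed

lemma class_member_offset:
  fixes k t :: nat
  assumes "k < n * t" and "k mod t = 0" and "a < t"
  shows "k + a < n * t" and "(k + a) div t = k div t" and "(k + a) mod t = a"
proof -
  obtain u where u: "k = u * t" using assms(2) by (metis mult.commute mod_eq_0_iff_dvd dvd_def)
  then have "u < n" using assms(1) by simp
  then have "k + a < (u + 1) * t" "(u + 1) * t \<le> n * t"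
    using assms(3) u by (simp, intro mult_le_mono1) simp
  then show "k + a < n * t" by linarith
  show "(k + a) div t = k div t" "(k + a) mod t = a" using assms(3) u by auto
qed

lemma class_rep_mat_column_support:
  fixes k t :: nat
  assumes k: "k < n * t"
  shows "{j \<in> {0..<n * t}. k = j div t * t \<and> j mod t \<noteq> 0} =
    (if k mod t = 0 then (\<lambda>a. k + a) ` {1..<t} else {})"
proof (cases "k mod t = 0")
  case True
  have t: "t > 0" using k by (cases t) auto
  have "{j \<in> {0..<n * t}. k = j div t * t \<and> j mod t \<noteq> 0} = (\<lambda>a. k + a) ` {1..<t}"
  proof (intro equalityI subsetI)
    fix j assume j: "j \<in> {j \<in> {0..<n * t}. k = j div t * t \<and> j mod t \<noteq> 0}"
    then have "j = k + j mod t" using div_mult_mod_eq[of j t] by auto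
    moreover have "j mod t \<in> {1..<t}" using j t by auto
    ultimately show "j \<in> (\<lambda>a. k + a) ` {1..<t}" by blast
  next
    fix j assume "j \<in> (\<lambda>a. k + a) ` {1..<t}"
    then obtain a where "a \<in> {1..<t}" "j = k + a" by blast
    then show "j \<in> {j \<in> {0..<n * t}. k = j div t * t \<and> j mod t \<noteq> 0}"
      using class_member_offset[OF k True, of a] True by (auto simp: mult.commute minus_mod_eq_mult_div)
  qed
  then show ?thesis using True by simp
qed auto

lemma class_rep_mat_mult_right_index:
  assumes X: "X \<in> carrier_mat (n * t) (n * t)" and i: "i < n * t" and k: "k < n * t"
  shows "(X * (1\<^sub>m (n * t) + class_rep_mat (n * t) t)) $$ (i, k) =
    X $$ (i, k) + (if k mod t = 0 then (\<Sum>a\<in>{1..<t}. X $$ (i, k + a)) else 0)"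
proof -
  let ?N = "n * t"
  let ?P = "\<lambda>j. k = j div t * t \<and> j mod t \<noteq> 0"
  have "(X * (1\<^sub>m ?N + class_rep_mat ?N t)) $$ (i, k) =
     (\<Sum>j\<in>{0..<?N}. X $$ (i, j) * ((if j = k then 1 else 0) + (if ?P j then 1 else 0)))"
    using X i k by (auto simp: scalar_prod_def class_rep_mat_def intro!: sum.cong)
  also have "\<dots> = (\<Sum>j\<in>{0..<?N}. if k = j then X $$ (i, j) else 0) +
      (\<Sum>j\<in>{0..<?N}. if ?P j then X $$ (i, j) else 0)"
    unfolding sum.distrib[symmetric] by (rule sum.cong) (auto simp: algebra_simps)
  also have "(\<Sum>j\<in>{0..<?N}. if k = j then X $$ (i, j) else 0) = X $$ (i, k)"
    using k by (simp add: sum.delta)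
  also have "(\<Sum>j\<in>{0..<?N}. if ?P j then X $$ (i, j) else 0) = (\<Sum>j\<in>{j\<in>{0..<?N}. ?P j}. X $$ (i, j))"
    by (rule sum.inter_filter[symmetric]) simp
  finally show ?thesis
    unfolding class_rep_mat_column_support[OF k]
    by (simp add: sum.reindex del: image_add_atLeastLessThan)
qed

lemma class_rep_mat_inverse:
  "(1\<^sub>m N + class_rep_mat N t) * (1\<^sub>m N + (-1) \<cdot>\<^sub>m class_rep_mat N t) = 1\<^sub>m N"
  "(1\<^sub>m N + (-1) \<cdot>\<^sub>m class_rep_mat N t) * (1\<^sub>m N + class_rep_mat N t) = 1\<^sub>m N"
proof -
  have "(1\<^sub>m N + c \<cdot>\<^sub>m class_rep_mat N t) * (1\<^sub>m N + (-c) \<cdot>\<^sub>m class_rep_mat N t) = 1\<^sub>m N" for c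
  proof (rule eq_matI)
    fix i k assume "i < dim_row (1\<^sub>m N)" "k < dim_col (1\<^sub>m N)"
    then have i: "i < N" and k: "k < N" by auto
    show "((1\<^sub>m N + c \<cdot>\<^sub>m class_rep_mat N t) * (1\<^sub>m N + (-c) \<cdot>\<^sub>m class_rep_mat N t)) $$ (i, k) = 1\<^sub>m N $$ (i, k)"
      by (subst class_rep_mat_mult_left_index) (use i k class_rep_less[OF i] in \<open>auto simp: class_rep_mat_def\<close>)
  qed auto
  from this[of 1] this[of "-1"] show
    "(1\<^sub>m N + class_rep_mat N t) * (1\<^sub>m N + (-1) \<cdot>\<^sub>m class_rep_mat N t) = 1\<^sub>m N"
    "(1\<^sub>m N + (-1) \<cdot>\<^sub>m class_rep_mat N t) * (1\<^sub>m N + class_rep_mat N t) = 1\<^sub>m N"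
    by simp_all
qed

text \<open>The matrix t D \<otimes> I_t + A \<otimes> e_0 r^T, indexed like the blow-up.\<close>
definition blow_up_reduced :: "nat \<Rightarrow> nat \<Rightarrow> (nat \<Rightarrow> nat \<Rightarrow> bool) \<Rightarrow> real mat" where
  "blow_up_reduced n t E = mat (n * t) (n * t) (\<lambda>(i, k).
     (if i = k then real t * real (degree_of n E (i div t)) else 0) +
     (if i mod t = 0 then (if k mod t = 0 then real t else 1) * adj_weight E (i div t) (k div t) else 0))"

lemma blow_up_reduced_carrier [simp]: "blow_up_reduced n t E \<in> carrier_mat (n * t) (n * t)"
  by (simp add: blow_up_reduced_def)

lemma sum_upto_class_indicator:
  fixes i k t :: nat
  assumes t: "t > 0" and k: "k mod t = 0"
  shows "(\<Sum>a\<in>{1..<t}. if i = k + a then c else 0) = (if i div t = k div t \<and> i mod t \<noteq> 0 then c else 0)"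
proof -
  obtain u where u: "k = u * t" using k by (metis mult.commute mod_eq_0_iff_dvd dvd_def)
  have "i = k + a \<longleftrightarrow> a = i mod t \<and> i div t = k div t" if "a < t" for a
  proof
    assume "i = k + a"
    then show "a = i mod t \<and> i div t = k div t" using that t u by simp
  next
    assume "a = i mod t \<and> i div t = k div t"
    then show "i = k + a" using t u div_mult_mod_eq[of i t] by simp
  qed
  then have "(\<Sum>a\<in>{1..<t}. if i = k + a then c else 0) =
      (\<Sum>a\<in>{1..<t}. if a = i mod t then (if i div t = k div t then c else 0) else 0)"
    by (intro sum.cong) auto
  then show ?thesis using t by (simp add: sum.delta')
qed

lemma sum_signless_laplacian_blow_up_class_tail:
  assumes t: "t > 0" and i: "i < n * t" and k: "k < n * t" and rep: "k mod t = 0"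
  shows "(\<Sum>a\<in>{1..<t}. signless_laplacian (n * t) (blow_up t E) $$ (i, k + a)) =
    (if i div t = k div t \<and> i mod t \<noteq> 0 then real t * real (degree_of n E (i div t)) else 0) +
    (real t - 1) * adj_weight E (i div t) (k div t)"
proof -
  have "(\<Sum>a\<in>{1..<t}. signless_laplacian (n * t) (blow_up t E) $$ (i, k + a)) =
      (\<Sum>a\<in>{1..<t}. (if i = k + a then real t * real (degree_of n E (i div t)) else 0) +
        adj_weight E (i div t) (k div t))"
    using signless_laplacian_blow_up_index[OF t i] class_member_offset[OF k rep] by (intro sum.cong) auto
  then show ?thesis
    unfolding sum.distrib sum_upto_class_indicator[OF t rep] using t by (simp add: of_nat_diff)
qed

lemma signless_laplacian_blow_up_mult_class_rep:
  fixes n t :: nat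
  assumes t: "t > 0"
  defines "N \<equiv> n * t"
  shows "signless_laplacian N (blow_up t E) * (1\<^sub>m N + class_rep_mat N t) =
    (1\<^sub>m N + class_rep_mat N t) * blow_up_reduced n t E"
    (is "?Q * ?S = ?S * ?B")
proof (rule eq_matI)
  have Q: "?Q \<in> carrier_mat N N" and B: "?B \<in> carrier_mat N N"
    by (simp_all add: signless_laplacian_carrier N_def)
  then show "dim_row (?Q * ?S) = dim_row (?S * ?B)" "dim_col (?Q * ?S) = dim_col (?S * ?B)"
    by simp_all
  fix i k assume "i < dim_row (?S * ?B)" "k < dim_col (?S * ?B)"
  then have i: "i < N" and k: "k < N" using B by auto
  let ?d = "\<lambda>v. real t * real (degree_of n E v)"
  let ?A = "adj_weight E (i div t) (k div t)"
  have Q_ik: "?Q $$ (i, k) = (if i = k then ?d (i div t) else 0) + ?A"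
    using signless_laplacian_blow_up_index[OF t] i k unfolding N_def by blast
  have B_ik: "?B $$ (i, k) = (if i = k then ?d (i div t) else 0) +
      (if i mod t = 0 then (if k mod t = 0 then real t else 1) * ?A else 0)"
    using i k by (simp add: blow_up_reduced_def N_def)
  have B_rep: "?B $$ (i div t * t, k) = (if i div t * t = k then ?d (i div t) else 0) +
      (if k mod t = 0 then real t else 1) * ?A"
    using class_rep_less[OF i, of t] k t by (auto simp: blow_up_reduced_def N_def)
  have SB: "(?S * ?B) $$ (i, k) = ?B $$ (i, k) + (if i mod t \<noteq> 0 then ?B $$ (i div t * t, k) else 0)"
    using class_rep_mat_mult_left_index[OF B i k, of 1] by simp
  have QS: "(?Q * ?S) $$ (i, k) = ?Q $$ (i, k) + (if k mod t = 0 then (\<Sum>a\<in>{1..<t}. ?Q $$ (i, k + a)) else 0)"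
    using class_rep_mat_mult_right_index[of ?Q n t i k] Q i k unfolding N_def by blast
  show "(?Q * ?S) $$ (i, k) = (?S * ?B) $$ (i, k)"
  proof (cases "k mod t = 0")
    case True
    obtain u where u: "k = u * t" using True by (metis mult.commute mod_eq_0_iff_dvd dvd_def)
    have sum: "(\<Sum>a\<in>{1..<t}. ?Q $$ (i, k + a)) =
        (if i div t = k div t \<and> i mod t \<noteq> 0 then ?d (i div t) else 0) + (real t - 1) * ?A"
      using sum_signless_laplacian_blow_up_class_tail[OF t _ _ True] i k unfolding N_def by blast
    have "i = k \<longleftrightarrow> i div t = k div t \<and> i mod t = 0"
      using u t div_mult_mod_eq[of i t] by auto
    moreover have "i div t * t = k \<longleftrightarrow> i div t = k div t"
      using u t by auto
    ultimately show ?thesis unfolding QS SB Q_ik B_ik B_rep sum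
      using True by (cases "i mod t = 0"; cases "i div t = k div t") (simp_all add: algebra_simps)
  next
    case False
    then have "i div t * t \<noteq> k" by auto
    then show ?thesis unfolding QS SB Q_ik B_ik B_rep using False by simp
  qed
qed

lemma similar_signless_laplacian_blow_up_reduced:
  assumes t: "t > 0"
  shows "similar_mat (signless_laplacian (n * t) (blow_up t E)) (blow_up_reduced n t E)"
proof -
  define N where "N = n * t"
  let ?Q = "signless_laplacian N (blow_up t E)"
  let ?S = "1\<^sub>m N + class_rep_mat N t"
  let ?T = "1\<^sub>m N + (-1) \<cdot>\<^sub>m class_rep_mat N t"
  have carrier: "?Q \<in> carrier_mat N N" "blow_up_reduced n t E \<in> carrier_mat N N"
    "?S \<in> carrier_mat N N" "?T \<in> carrier_mat N N"
    by (auto simp: signless_laplacian_carrier N_def)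
  have "?Q = ?Q * (?S * ?T)"
    using carrier by (simp add: class_rep_mat_inverse)
  also have "\<dots> = (?Q * ?S) * ?T"
    using assoc_mult_mat[OF carrier(1,3,4)] by simp
  also have "\<dots> = ?S * blow_up_reduced n t E * ?T"
    unfolding N_def signless_laplacian_blow_up_mult_class_rep[OF t] ..
  finally have conj: "?Q = ?S * blow_up_reduced n t E * ?T" .
  have "{?Q, blow_up_reduced n t E, ?S, ?T} \<subseteq> carrier_mat N N"
    using carrier by auto
  from similar_matI[OF this class_rep_mat_inverse[of N t] conj] show ?thesis
    unfolding N_def .
qed

text \<open>Enumerates the representatives 0, t, ..., (n - 1) t first and then the remaining
  vertices in increasing order (here t = Suc s).\<close>
definition rep_first_perm :: "nat \<Rightarrow> nat \<Rightarrow> nat \<Rightarrow> nat" where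
  "rep_first_perm n s i =
     (if i < n then i * Suc s
      else if i < n * Suc s then (i - n) div s * Suc s + ((i - n) mod s + 1)
      else i)"

lemma div_mod_add_mult: "(a :: nat) < t \<Longrightarrow> (a + q * t) div t = q \<and> (a + q * t) mod t = a"
  by simp

lemma rep_first_perm_less:
  "i < n \<Longrightarrow> rep_first_perm n s i div Suc s = i \<and> rep_first_perm n s i mod Suc s = 0"
  unfolding rep_first_perm_def using div_mod_add_mult[of 0 "Suc s" i] by simp

lemma rep_first_perm_ge:
  assumes "n \<le> i" "i < n * Suc s"
  shows "s > 0" and "rep_first_perm n s i div Suc s = (i - n) div s \<and>
    rep_first_perm n s i mod Suc s = (i - n) mod s + 1"
proof -
  show s: "s > 0" using assms by (cases s) auto
  have "rep_first_perm n s i = ((i - n) mod s + 1) + (i - n) div s * Suc s"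
    using assms unfolding rep_first_perm_def by simp
  moreover have "(i - n) mod s + 1 < Suc s" using s by simp
  ultimately show "rep_first_perm n s i div Suc s = (i - n) div s \<and>
    rep_first_perm n s i mod Suc s = (i - n) mod s + 1"
    using div_mod_add_mult[of "(i - n) mod s + 1" "Suc s" "(i - n) div s"] by (simp only:)
qed

lemma rep_first_perm_bound:
  assumes "i < n * Suc s"
  shows "rep_first_perm n s i < n * Suc s"
proof (cases "i < n")
  case True
  then have "i * Suc s < n * Suc s" by (intro mult_less_mono1) simp_all
  then show ?thesis using True unfolding rep_first_perm_def by simp
next
  case False
  then have s: "s > 0" using rep_first_perm_ge(1)[of n i s] assms by simp
  have "(i - n) div s < n" using False assms s by (simp add: div_less_iff_less_mult mult.commute)
  have "(i - n) div s * Suc s + ((i - n) mod s + 1) < (i - n) div s * Suc s + Suc s"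
    using s by (intro add_strict_left_mono) simp
  also have "\<dots> = ((i - n) div s + 1) * Suc s" by simp
  also have "\<dots> \<le> n * Suc s" using \<open>(i - n) div s < n\<close> by (intro mult_le_mono1) simp
  finally show ?thesis using False assms unfolding rep_first_perm_def by simp
qed

lemma rep_first_perm_inj: "inj_on (rep_first_perm n s) {0..<n * Suc s}"
proof (rule inj_onI)
  fix i j assume i: "i \<in> {0..<n * Suc s}" and j: "j \<in> {0..<n * Suc s}"
    and eq: "rep_first_perm n s i = rep_first_perm n s j"
  show "i = j"
  proof (cases "i < n"; cases "j < n")
    assume "i < n" "j < n"
    then show ?thesis using eq rep_first_perm_less by metis
  next
    assume "i < n" "\<not> j < n"
    then show ?thesis using eq rep_first_perm_less[of i n s] rep_first_perm_ge(2)[of n j s] j by simp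
  next
    assume "\<not> i < n" "j < n"
    then show ?thesis using eq rep_first_perm_less[of j n s] rep_first_perm_ge(2)[of n i s] i by simp
  next
    assume "\<not> i < n" "\<not> j < n"
    then have "(i - n) div s * s + (i - n) mod s = (j - n) div s * s + (j - n) mod s"
      using eq rep_first_perm_ge(2)[of n i s] rep_first_perm_ge(2)[of n j s] i j by auto
    then show ?thesis using \<open>\<not> i < n\<close> \<open>\<not> j < n\<close> by simp
  qed
qed

lemma rep_first_perm_permutes: "rep_first_perm n s permutes {0..<n * Suc s}"
proof -
  have "rep_first_perm n s ` {0..<n * Suc s} \<subseteq> {0..<n * Suc s}"
    using rep_first_perm_bound by auto
  then have "bij_betw (rep_first_perm n s) {0..<n * Suc s} {0..<n * Suc s}"
    using rep_first_perm_inj endo_inj_surj[of "{0..<n * Suc s}"] by (simp add: bij_betw_def)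
  moreover have "rep_first_perm n s i = i" if "i \<notin> {0..<n * Suc s}" for i
    using that unfolding rep_first_perm_def by auto
  ultimately show ?thesis by (intro bij_imp_permutes) auto
qed

lemma blow_up_reduced_permuted:
  fixes n s :: nat
  defines "t \<equiv> Suc s" and "p \<equiv> rep_first_perm n s"
  shows "mat (n * t) (n * t) (\<lambda>(i, j). blow_up_reduced n t E $$ (p i, p j)) =
    four_block_mat (real t \<cdot>\<^sub>m signless_laplacian n E)
      (mat n (n * s) (\<lambda>(i, j). adj_weight E i (j div s))) (0\<^sub>m (n * s) n)
      (mat (n * s) (n * s) (\<lambda>(i, j). if i = j then real t * real (degree_of n E (i div s)) else 0))"
    (is "?L = ?R")
proof (rule eq_matI)
  have Q: "signless_laplacian n E \<in> carrier_mat n n" by (rule signless_laplacian_carrier)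
  then show "dim_row ?L = dim_row ?R" "dim_col ?L = dim_col ?R" by (simp_all add: t_def)
  fix i j assume "i < dim_row ?R" "j < dim_col ?R"
  then have i: "i < n * t" and j: "j < n * t" using Q by (auto simp: t_def)
  have "p i = p j \<longleftrightarrow> i = j"
    using rep_first_perm_inj[of n s] i j unfolding p_def t_def by (auto dest: inj_onD)
  then have L: "?L $$ (i, j) = (if i = j then real t * real (degree_of n E (p i div t)) else 0) +
      (if p i mod t = 0 then (if p j mod t = 0 then real t else 1) * adj_weight E (p i div t) (p j div t) else 0)"
    using i j rep_first_perm_bound[of i n s] rep_first_perm_bound[of j n s]
    by (simp add: blow_up_reduced_def p_def t_def)
  show "?L $$ (i, j) = ?R $$ (i, j)"
  proof (cases "i < n"; cases "j < n")
    assume "i < n" "j < n"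
    then show ?thesis unfolding L using rep_first_perm_less[of i n s] rep_first_perm_less[of j n s] Q
      by (simp add: index_mat_four_block signless_laplacian_index p_def t_def algebra_simps)
  next
    assume "i < n" "\<not> j < n"
    then show ?thesis unfolding L using rep_first_perm_less[of i n s] rep_first_perm_ge[of n j s] j Q
      by (simp add: index_mat_four_block p_def t_def)
  next
    assume "\<not> i < n" "j < n"
    then show ?thesis unfolding L using rep_first_perm_less[of j n s] rep_first_perm_ge[of n i s] i Q
      by (simp add: index_mat_four_block p_def t_def)
  next
    assume "\<not> i < n" "\<not> j < n"
    then show ?thesis unfolding L using rep_first_perm_ge[of n i s] rep_first_perm_ge[of n j s] i j Q
      by (auto simp: index_mat_four_block p_def t_def)
  qed
qed

theorem theorem2:
  fixes n t :: nat and E :: "nat \<Rightarrow> nat \<Rightarrow> bool"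
  assumes "simple_graph n E" and "t \<ge> 1"
  shows "eigenvalues_mset (signless_laplacian (n * t) (blow_up t E)) =
           image_mset (\<lambda>q. real t * q) (eigenvalues_mset (signless_laplacian n E))
         + repeat_mset (t - 1)
             (image_mset (\<lambda>i. real t * real (degree_of n E i)) (mset_set {0..<n}))"
proof -
  obtain s where t: "t = Suc s" using assms(2) by (cases t) auto
  let ?Q = "signless_laplacian n E"
  let ?D = "mat (n * s) (n * s) (\<lambda>(i, j). if i = j then real t * real (degree_of n E (i div s)) else 0)"
  have "char_poly (signless_laplacian (n * t) (blow_up t E)) = char_poly (blow_up_reduced n t E)"
    using similar_signless_laplacian_blow_up_reduced[of t n E] t by (simp add: char_poly_similar)
  also have "\<dots> = char_poly (mat (n * t) (n * t)
      (\<lambda>(i, j). blow_up_reduced n t E $$ (rep_first_perm n s i, rep_first_perm n s j)))"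
    unfolding t by (rule char_poly_permute_rows_cols[OF blow_up_reduced_carrier rep_first_perm_permutes, symmetric])
  also have "\<dots> = char_poly (real t \<cdot>\<^sub>m ?Q) * char_poly ?D"
    unfolding t blow_up_reduced_permuted
    by (rule char_poly_four_block_mat_lower_left_zero) (auto simp: signless_laplacian_carrier)
  finally have "eigenvalues_mset (signless_laplacian (n * t) (blow_up t E)) =
      proots (char_poly (real t \<cdot>\<^sub>m ?Q)) + proots (char_poly ?D)"
    unfolding eigenvalues_mset_def
    by (simp add: proots_mult char_poly_nonzero[of _ n] char_poly_nonzero[of _ "n * s"] signless_laplacian_carrier)
  also have "proots (char_poly (real t \<cdot>\<^sub>m ?Q)) = image_mset ((*) (real t)) (eigenvalues_mset ?Q)"
    unfolding eigenvalues_mset_def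
    by (rule proots_char_poly_smult_mat[OF signless_laplacian_carrier]) (use t in simp)
  also have "proots (char_poly ?D) =
      repeat_mset s (image_mset (\<lambda>i. real t * real (degree_of n E i)) (mset_set {0..<n}))"
    unfolding proots_char_poly_diagonal by (rule mset_map_div_upt)
  finally show ?thesis using t by simp
qed

end
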